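(* For all integers $t_1\geq s_1\geq 1$ and $t_2\geq s_2\geq 1$, $$\operatorname{degen}(K_{s_1,t_1}\boxtimes K_{s_2,t_2})=\max\{s_1+s_2+s_1s_2,\ \min\{t_1+t_2,\ s_1(t_2+1),\ s_2(t_1+1)\},\ \min\{s_1t_2,\ s_2t_1\}\}.$$
   Context: The degeneracy $\operatorname{degen}(G)$ of a graph $G$ is the minimum integer $d$ such that every subgraph of $G$ has minimum degree at most $d$. The strong product $G_1 \boxtimes G_2$ has vertex set $V(G_1)\times V(G_2)$, with distinct vertices $(a,v),(b,u)$ adjacent iff ($a=b$ or $ab\in E(G_1)$) and ($u=v$ or $uv\in E(G_2)$). *)

theory Defs
  imports Main
begin

text \<open>A finite simple graph is represented by a vertex set V and an edge set E,
  each edge being a 2-element set of vertices.\<close>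

type_synonym 'a graph = "'a set \<times> 'a set set"

definition verts :: "'a graph \<Rightarrow> 'a set" where "verts G = fst G"
definition edges :: "'a graph \<Rightarrow> 'a set set" where "edges G = snd G"

definition nonempty_subgraph :: "'a graph \<Rightarrow> 'a graph \<Rightarrow> bool" where
  "nonempty_subgraph H G \<longleftrightarrow>
     verts H \<noteq> {} \<and> verts H \<subseteq> verts G \<and> edges H \<subseteq> edges G \<and>
     (\<forall>e\<in>edges H. e \<subseteq> verts H)"

definition degree :: "'a graph \<Rightarrow> 'a \<Rightarrow> nat" where
  "degree G v = card {e \<in> edges G. v \<in> e}"

definition degen :: "'a graph \<Rightarrow> nat" where
  "degen G = (LEAST d. \<forall>H. nonempty_subgraph H G \<longrightarrow> (\<exists>v\<in>verts H. degree H v \<le> d))"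

definition K_bip :: "nat \<Rightarrow> nat \<Rightarrow> (nat + nat) graph" where
  "K_bip s t = (Inl ` {..<s} \<union> Inr ` {..<t},
                {{Inl i, Inr j} | i j. i < s \<and> j < t})"

definition strong_prod :: "'a graph \<Rightarrow> 'b graph \<Rightarrow> ('a \<times> 'b) graph" where
  "strong_prod G1 G2 = (verts G1 \<times> verts G2,
     {{(a,v),(b,u)} | a v b u.
        a \<in> verts G1 \<and> b \<in> verts G1 \<and> v \<in> verts G2 \<and> u \<in> verts G2 \<and>
        (a,v) \<noteq> (b,u) \<and>
        (a = b \<or> {a,b} \<in> edges G1) \<and> (u = v \<or> {u,v} \<in> edges G2)})"

end

theory Submission
  imports Defs
begin

(* Split each K_{s,t} into its small side A (the Inl vertices) and its large side B. The closed
   neighbourhood of (x, y) in the strong product is N[x] \<times> N[y], so the vertices of B1 \<times> B2 have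
   degree (s1 + 1)(s2 + 1) - 1 = s1 + s2 + s1 s2, the minimum degree of the whole graph. Likewise
   the other two terms are the minimum degrees of the subgraphs induced on the complement of
   B1 \<times> B2 and on A1 \<times> B2 \<union> B1 \<times> A2. Conversely, a subgraph meeting B1 \<times> B2 has a vertex of degree
   at most s1 + s2 + s1 s2; a subgraph avoiding it lives on A1 \<times> A2, A1 \<times> B2 and B1 \<times> A2, and
   counting the neighbours of a vertex of each part inside the other parts yields a vertex whose
   degree is bounded by one of the three terms. *)

definition simple_graph :: "'a graph \<Rightarrow> bool" where
  "simple_graph G \<longleftrightarrow> finite (verts G) \<and> (\<forall>e\<in>edges G. \<exists>x y. x \<noteq> y \<and> e = {x, y})"

definition neighbours :: "'a graph \<Rightarrow> 'a set \<Rightarrow> 'a \<Rightarrow> 'a set" where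
  "neighbours G S v = {u \<in> S. {v, u} \<in> edges G}"

definition induced_subgraph :: "'a graph \<Rightarrow> 'a set \<Rightarrow> 'a graph" where
  "induced_subgraph G S = (S, {e \<in> edges G. e \<subseteq> S})"

definition closed_nbhd :: "'a graph \<Rightarrow> 'a \<Rightarrow> 'a set" where
  "closed_nbhd G a = {b \<in> verts G. b = a \<or> {a, b} \<in> edges G}"

lemma edges_containing_subset_image_neighbours:
  assumes "simple_graph G" "edges H \<subseteq> edges G" "\<forall>e\<in>edges H. e \<subseteq> verts H"
  shows "{e \<in> edges H. v \<in> e} \<subseteq> (\<lambda>u. {v, u}) ` neighbours G (verts H) v"
proof
  fix e assume e: "e \<in> {e \<in> edges H. v \<in> e}"
  then obtain x y where "e = {x, y}"
    using assms(1,2) unfolding simple_graph_def by blast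
  with e obtain u where "e = {v, u}"
    by (auto simp: insert_commute)
  with e assms(2,3) show "e \<in> (\<lambda>u. {v, u}) ` neighbours G (verts H) v"
    unfolding neighbours_def by blast
qed

lemma finite_neighbours:
  "simple_graph G \<Longrightarrow> S \<subseteq> verts G \<Longrightarrow> finite (neighbours G S v)"
  unfolding simple_graph_def neighbours_def by (auto intro: finite_subset)

lemma neighbours_mono: "S \<subseteq> T \<Longrightarrow> neighbours G S v \<subseteq> neighbours G T v"
  by (auto simp: neighbours_def)

lemma degree_le_card_neighbours:
  assumes "simple_graph G" "nonempty_subgraph H G"
  shows "degree H v \<le> card (neighbours G (verts H) v)"
  unfolding degree_def
  using assms edges_containing_subset_image_neighbours[of G H v]
  by (intro surj_card_le finite_neighbours) (auto simp: nonempty_subgraph_def)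

lemma degree_induced_subgraph:
  assumes "simple_graph G" "S \<subseteq> verts G" "v \<in> S"
  shows "degree (induced_subgraph G S) v = card (neighbours G S v)"
proof -
  have "{e \<in> edges (induced_subgraph G S). v \<in> e} = (\<lambda>u. {v, u}) ` neighbours G S v"
  proof
    show "{e \<in> edges (induced_subgraph G S). v \<in> e} \<subseteq> (\<lambda>u. {v, u}) ` neighbours G S v"
      using edges_containing_subset_image_neighbours[OF assms(1), of "induced_subgraph G S"]
      by (auto simp: induced_subgraph_def edges_def verts_def)
  qed (use assms(3) in \<open>auto simp: neighbours_def induced_subgraph_def edges_def\<close>)
  moreover have "inj_on (\<lambda>u. {v, u}) (neighbours G S v)"
    by (auto simp: inj_on_def doubleton_eq_iff)
  ultimately show ?thesis
    by (simp add: degree_def card_image)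
qed

lemma nonempty_subgraph_induced_subgraph:
  "S \<subseteq> verts G \<Longrightarrow> S \<noteq> {} \<Longrightarrow> nonempty_subgraph (induced_subgraph G S) G"
  by (auto simp: nonempty_subgraph_def induced_subgraph_def verts_def edges_def)

lemma degree_le_if_neighbours_le:
  assumes "simple_graph G"
    and "\<And>S. S \<subseteq> verts G \<Longrightarrow> S \<noteq> {} \<Longrightarrow> \<exists>v\<in>S. card (neighbours G S v) \<le> d"
  shows "\<forall>H. nonempty_subgraph H G \<longrightarrow> (\<exists>v\<in>verts H. degree H v \<le> d)"
proof (intro allI impI)
  fix H assume H: "nonempty_subgraph H G"
  then obtain v where "v \<in> verts H" "card (neighbours G (verts H) v) \<le> d"
    using assms(2)[of "verts H"] by (auto simp: nonempty_subgraph_def)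
  then show "\<exists>v\<in>verts H. degree H v \<le> d"
    using degree_le_card_neighbours[OF assms(1) H] le_trans by blast
qed

lemma degen_le:
  assumes "simple_graph G"
    and "\<And>S. S \<subseteq> verts G \<Longrightarrow> S \<noteq> {} \<Longrightarrow> \<exists>v\<in>S. card (neighbours G S v) \<le> d"
  shows "degen G \<le> d"
  unfolding degen_def by (rule Least_le) (rule degree_le_if_neighbours_le[OF assms])

lemma exists_degree_le_degen:
  assumes "simple_graph G" "nonempty_subgraph H G"
  shows "\<exists>v\<in>verts H. degree H v \<le> degen G"
proof -
  have "\<forall>H. nonempty_subgraph H G \<longrightarrow> (\<exists>v\<in>verts H. degree H v \<le> card (verts G))"
    using assms(1) by (intro degree_le_if_neighbours_le)
      (auto simp: neighbours_def simple_graph_def intro!: card_mono)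
  then have "\<forall>H. nonempty_subgraph H G \<longrightarrow> (\<exists>v\<in>verts H. degree H v \<le> degen G)"
    unfolding degen_def by (rule LeastI)
  then show ?thesis
    using assms(2) by blast
qed

lemma le_degen:
  assumes "simple_graph G" "S \<subseteq> verts G" "S \<noteq> {}"
    and "\<And>v. v \<in> S \<Longrightarrow> d \<le> card (neighbours G S v)"
  shows "d \<le> degen G"
proof -
  obtain v where "v \<in> S" "degree (induced_subgraph G S) v \<le> degen G"
    using exists_degree_le_degen[OF assms(1) nonempty_subgraph_induced_subgraph[OF assms(2,3)]]
    by (auto simp: induced_subgraph_def verts_def)
  then show ?thesis
    using assms(4) degree_induced_subgraph[OF assms(1,2)] by fastforce
qed

lemma verts_strong_prod: "verts (strong_prod G1 G2) = verts G1 \<times> verts G2"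
  by (simp add: strong_prod_def verts_def)

lemma strong_prod_edge_iff:
  "{p, q} \<in> edges (strong_prod G1 G2) \<longleftrightarrow>
     p \<in> verts G1 \<times> verts G2 \<and> q \<in> verts G1 \<times> verts G2 \<and> p \<noteq> q \<and>
     (fst p = fst q \<or> {fst p, fst q} \<in> edges G1) \<and> (snd p = snd q \<or> {snd p, snd q} \<in> edges G2)"
  by (cases p; cases q) (auto simp: strong_prod_def edges_def doubleton_eq_iff insert_commute)

lemma simple_graph_strong_prod:
  "finite (verts G1) \<Longrightarrow> finite (verts G2) \<Longrightarrow> simple_graph (strong_prod G1 G2)"
  unfolding simple_graph_def verts_strong_prod by (auto simp: strong_prod_def edges_def)

lemma neighbours_strong_prod:
  assumes "S \<subseteq> verts G1 \<times> verts G2" "p \<in> verts G1 \<times> verts G2"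
  shows "neighbours (strong_prod G1 G2) S p = S \<inter> (closed_nbhd G1 (fst p) \<times> closed_nbhd G2 (snd p)) - {p}"
  using assms by (auto simp: neighbours_def strong_prod_edge_iff closed_nbhd_def insert_commute)

lemma verts_K_bip: "verts (K_bip s t) = Inl ` {..<s} \<union> Inr ` {..<t}"
  by (simp add: K_bip_def verts_def)

lemma closed_nbhd_K_bip_Inl: "i < s \<Longrightarrow> closed_nbhd (K_bip s t) (Inl i) = insert (Inl i) (Inr ` {..<t})"
  by (auto simp: closed_nbhd_def K_bip_def verts_def edges_def doubleton_eq_iff)

lemma closed_nbhd_K_bip_Inr: "j < t \<Longrightarrow> closed_nbhd (K_bip s t) (Inr j) = insert (Inr j) (Inl ` {..<s})"
  by (auto simp: closed_nbhd_def K_bip_def verts_def edges_def doubleton_eq_iff)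

lemma card_closed_nbhd_K_bip:
  "x \<in> verts (K_bip s t) \<Longrightarrow> card (closed_nbhd (K_bip s t) x) = Suc (case_sum (\<lambda>_. t) (\<lambda>_. s) x)"
  by (auto simp: verts_K_bip closed_nbhd_K_bip_Inl closed_nbhd_K_bip_Inr card_image image_iff)

lemma card_neighbours_strong_prod_verts:
  assumes "finite (verts G1)" "finite (verts G2)" "p \<in> verts (strong_prod G1 G2)"
  shows "card (neighbours (strong_prod G1 G2) (verts (strong_prod G1 G2)) p) =
           card (closed_nbhd G1 (fst p)) * card (closed_nbhd G2 (snd p)) - 1"
proof -
  have "closed_nbhd G1 (fst p) \<subseteq> verts G1" "closed_nbhd G2 (snd p) \<subseteq> verts G2"
    by (auto simp: closed_nbhd_def)
  moreover have "p \<in> closed_nbhd G1 (fst p) \<times> closed_nbhd G2 (snd p)"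
    using assms(3) by (auto simp: closed_nbhd_def verts_strong_prod)
  moreover have "finite (closed_nbhd G1 (fst p))" "finite (closed_nbhd G2 (snd p))"
    using assms(1,2) by (auto simp: closed_nbhd_def)
  ultimately show ?thesis
    using assms(3) by (simp add: verts_strong_prod neighbours_strong_prod Int_absorb1 Sigma_mono
        card_cartesian_product)
qed

lemma card_Int_Times_le:
  assumes "finite S" "finite A'" "finite B'" "A' \<subseteq> A" "B' \<subseteq> B"
  shows "card (S \<inter> A' \<times> B') \<le> min (card (S \<inter> A \<times> B)) (card A' * card B')"
proof -
  have "card (S \<inter> A' \<times> B') \<le> card (S \<inter> A \<times> B)"
    using assms by (intro card_mono) auto
  moreover have "card (S \<inter> A' \<times> B') \<le> card A' * card B'"
    using assms(2,3) by (metis Int_lower2 card_cartesian_product card_mono finite_SigmaI)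
  ultimately show ?thesis
    by simp
qed

lemma Times_insert_minus_subset: "insert x N \<times> insert y M - {(x, y)} \<subseteq> {x} \<times> M \<union> N \<times> {y} \<union> N \<times> M"
  by auto

context
  fixes s1 t1 s2 t2 :: nat
begin

abbreviation (input) A1 :: "(nat + nat) set" where "A1 \<equiv> Inl ` {..<s1}"
abbreviation (input) B1 :: "(nat + nat) set" where "B1 \<equiv> Inr ` {..<t1}"
abbreviation (input) A2 :: "(nat + nat) set" where "A2 \<equiv> Inl ` {..<s2}"
abbreviation (input) B2 :: "(nat + nat) set" where "B2 \<equiv> Inr ` {..<t2}"

abbreviation K_prod :: "((nat + nat) \<times> (nat + nat)) graph" where
  "K_prod \<equiv> strong_prod (K_bip s1 t1) (K_bip s2 t2)"

lemma verts_K_prod: "verts K_prod = (A1 \<union> B1) \<times> (A2 \<union> B2)"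
  by (simp add: verts_strong_prod verts_K_bip)

lemma simple_graph_K_prod: "simple_graph K_prod"
  by (simp add: simple_graph_strong_prod verts_K_bip)

lemma neighbours_K_prod:
  "S \<subseteq> verts K_prod \<Longrightarrow> p \<in> verts K_prod \<Longrightarrow>
     neighbours K_prod S p = S \<inter> (closed_nbhd (K_bip s1 t1) (fst p) \<times> closed_nbhd (K_bip s2 t2) (snd p)) - {p}"
  by (simp add: neighbours_strong_prod verts_strong_prod)

lemma card_le_card_neighbours_K_prod:
  "S \<subseteq> verts K_prod \<Longrightarrow> T \<subseteq> neighbours K_prod S p \<Longrightarrow> card T \<le> card (neighbours K_prod S p)"
  by (rule card_mono[OF finite_neighbours[OF simple_graph_K_prod]])

lemma card_neighbours_K_prod_verts_ge:
  assumes "s1 \<le> t1" "s2 \<le> t2" "p \<in> verts K_prod"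
  shows "s1 + s2 + s1 * s2 \<le> card (neighbours K_prod (verts K_prod) p)"
proof -
  have "Suc s1 \<le> card (closed_nbhd (K_bip s1 t1) (fst p))"
    "Suc s2 \<le> card (closed_nbhd (K_bip s2 t2) (snd p))"
    using assms by (auto simp: card_closed_nbhd_K_bip verts_strong_prod split: sum.split)
  then have "Suc s1 * Suc s2 \<le> card (closed_nbhd (K_bip s1 t1) (fst p)) * card (closed_nbhd (K_bip s2 t2) (snd p))"
    by (rule mult_le_mono)
  then show ?thesis
    using assms(3) by (simp add: card_neighbours_strong_prod_verts verts_K_bip)
qed

lemma card_neighbours_K_prod_B1_B2_le:
  assumes "S \<subseteq> verts K_prod" "p \<in> B1 \<times> B2"
  shows "card (neighbours K_prod S p) \<le> s1 + s2 + s1 * s2"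
proof -
  have p: "p \<in> verts K_prod"
    using assms(2) by (auto simp: verts_K_prod)
  have "card (neighbours K_prod S p) \<le> card (neighbours K_prod (verts K_prod) p)"
    using assms(1) by (intro card_le_card_neighbours_K_prod neighbours_mono) auto
  also have "\<dots> = s1 + s2 + s1 * s2"
    using p assms(2) by (auto simp: card_neighbours_strong_prod_verts verts_K_bip card_closed_nbhd_K_bip)
  finally show ?thesis .
qed

lemma card_neighbours_K_prod_minus_B1_B2_ge:
  assumes "p \<in> verts K_prod - B1 \<times> B2"
  shows "min (t1 + t2) (min (s1 * (t2 + 1)) (s2 * (t1 + 1)))
           \<le> card (neighbours K_prod (verts K_prod - B1 \<times> B2) p)"
proof -
  have S: "verts K_prod - B1 \<times> B2 \<subseteq> verts K_prod" and p: "p \<in> verts K_prod"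
    using assms by auto
  consider a v where "p = (Inl a, Inl v)" "a < s1" "v < s2"
    | a w where "p = (Inl a, Inr w)" "a < s1" "w < t2"
    | b v where "p = (Inr b, Inl v)" "b < t1" "v < s2"
    using assms by (auto simp: verts_K_prod)
  then show ?thesis
  proof cases
    case (1 a v)
    have "neighbours K_prod (verts K_prod - B1 \<times> B2) p
            = (verts K_prod - B1 \<times> B2) \<inter> (insert (Inl a) B1 \<times> insert (Inl v) B2) - {p}"
      unfolding neighbours_K_prod[OF S p] using 1 by (simp add: closed_nbhd_K_bip_Inl)
    then have "{Inl a} \<times> B2 \<union> B1 \<times> {Inl v} \<subseteq> neighbours K_prod (verts K_prod - B1 \<times> B2) p"
      using 1 by (auto simp: verts_K_prod)
    then have "card ({Inl a} \<times> B2 \<union> B1 \<times> {Inl v}) \<le> card (neighbours K_prod (verts K_prod - B1 \<times> B2) p)"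
      by (rule card_le_card_neighbours_K_prod[OF S])
    moreover have "card ({Inl a} \<times> B2 \<union> B1 \<times> {Inl v}) = t2 + t1"
      by (subst card_Un_disjoint) (auto simp: card_cartesian_product card_image)
    ultimately show ?thesis
      by (simp add: min_le_iff_disj)
  next
    case (2 a w)
    have "neighbours K_prod (verts K_prod - B1 \<times> B2) p
            = (verts K_prod - B1 \<times> B2) \<inter> (insert (Inl a) B1 \<times> insert (Inr w) A2) - {p}"
      unfolding neighbours_K_prod[OF S p] using 2 by (simp add: closed_nbhd_K_bip_Inl closed_nbhd_K_bip_Inr)
    then have "insert (Inl a) B1 \<times> A2 \<subseteq> neighbours K_prod (verts K_prod - B1 \<times> B2) p"
      using 2 by (auto simp: verts_K_prod)
    then have "card (insert (Inl a) B1 \<times> A2) \<le> card (neighbours K_prod (verts K_prod - B1 \<times> B2) p)"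
      by (rule card_le_card_neighbours_K_prod[OF S])
    then show ?thesis
      by (simp add: card_cartesian_product card_image image_iff min_le_iff_disj mult.commute)
  next
    case (3 b v)
    have "neighbours K_prod (verts K_prod - B1 \<times> B2) p
            = (verts K_prod - B1 \<times> B2) \<inter> (insert (Inr b) A1 \<times> insert (Inl v) B2) - {p}"
      unfolding neighbours_K_prod[OF S p] using 3 by (simp add: closed_nbhd_K_bip_Inl closed_nbhd_K_bip_Inr)
    then have "A1 \<times> insert (Inl v) B2 \<subseteq> neighbours K_prod (verts K_prod - B1 \<times> B2) p"
      using 3 by (auto simp: verts_K_prod)
    then have "card (A1 \<times> insert (Inl v) B2) \<le> card (neighbours K_prod (verts K_prod - B1 \<times> B2) p)"
      by (rule card_le_card_neighbours_K_prod[OF S])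
    then show ?thesis
      by (simp add: card_cartesian_product card_image image_iff min_le_iff_disj)
  qed
qed

lemma card_neighbours_K_prod_A1_B2_B1_A2_ge:
  assumes "p \<in> A1 \<times> B2 \<union> B1 \<times> A2"
  shows "min (s1 * t2) (s2 * t1) \<le> card (neighbours K_prod (A1 \<times> B2 \<union> B1 \<times> A2) p)"
proof -
  have S: "A1 \<times> B2 \<union> B1 \<times> A2 \<subseteq> verts K_prod" and p: "p \<in> verts K_prod"
    using assms by (auto simp: verts_K_prod)
  consider a w where "p = (Inl a, Inr w)" "a < s1" "w < t2"
    | b v where "p = (Inr b, Inl v)" "b < t1" "v < s2"
    using assms by auto
  then show ?thesis
  proof cases
    case (1 a w)
    have "neighbours K_prod (A1 \<times> B2 \<union> B1 \<times> A2) p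
            = (A1 \<times> B2 \<union> B1 \<times> A2) \<inter> (insert (Inl a) B1 \<times> insert (Inr w) A2) - {p}"
      unfolding neighbours_K_prod[OF S p] using 1 by (simp add: closed_nbhd_K_bip_Inl closed_nbhd_K_bip_Inr)
    then have "B1 \<times> A2 \<subseteq> neighbours K_prod (A1 \<times> B2 \<union> B1 \<times> A2) p"
      using 1 by auto
    then have "card (B1 \<times> A2) \<le> card (neighbours K_prod (A1 \<times> B2 \<union> B1 \<times> A2) p)"
      by (rule card_le_card_neighbours_K_prod[OF S])
    then show ?thesis
      by (simp add: card_cartesian_product card_image min_le_iff_disj mult.commute)
  next
    case (2 b v)
    have "neighbours K_prod (A1 \<times> B2 \<union> B1 \<times> A2) p
            = (A1 \<times> B2 \<union> B1 \<times> A2) \<inter> (insert (Inr b) A1 \<times> insert (Inl v) B2) - {p}"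
      unfolding neighbours_K_prod[OF S p] using 2 by (simp add: closed_nbhd_K_bip_Inl closed_nbhd_K_bip_Inr)
    then have "A1 \<times> B2 \<subseteq> neighbours K_prod (A1 \<times> B2 \<union> B1 \<times> A2) p"
      using 2 by auto
    then have "card (A1 \<times> B2) \<le> card (neighbours K_prod (A1 \<times> B2 \<union> B1 \<times> A2) p)"
      by (rule card_le_card_neighbours_K_prod[OF S])
    then show ?thesis
      by (simp add: card_cartesian_product card_image min_le_iff_disj)
  qed
qed

lemma finite_verts_K_prod: "finite (verts K_prod)"
  by (simp add: verts_K_prod)

lemma card_neighbours_K_prod_A1_A2_le:
  assumes "S \<subseteq> verts K_prod" "S \<inter> B1 \<times> B2 = {}" "p \<in> A1 \<times> A2"
  shows "card (neighbours K_prod S p) \<le> min (card (S \<inter> A1 \<times> B2)) t2 + min (card (S \<inter> B1 \<times> A2)) t1"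
proof -
  obtain a v where p: "p = (Inl a, Inl v)" "a < s1" "v < s2"
    using assms(3) by auto
  then have "p \<in> verts K_prod"
    by (simp add: verts_K_prod)
  have "neighbours K_prod S p = S \<inter> (insert (Inl a) B1 \<times> insert (Inl v) B2 - {p})"
    unfolding neighbours_K_prod[OF assms(1) \<open>p \<in> verts K_prod\<close>] using p by (simp add: closed_nbhd_K_bip_Inl Int_Diff)
  also have "\<dots> \<subseteq> S \<inter> ({Inl a} \<times> B2 \<union> B1 \<times> {Inl v} \<union> B1 \<times> B2)"
    unfolding p(1) by (intro Int_mono order_refl Times_insert_minus_subset)
  also have "\<dots> = S \<inter> {Inl a} \<times> B2 \<union> S \<inter> B1 \<times> {Inl v}"
    using assms(2) by (simp add: Int_Un_distrib)
  finally have "neighbours K_prod S p \<subseteq> S \<inter> {Inl a} \<times> B2 \<union> S \<inter> B1 \<times> {Inl v}" .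
  moreover have fin: "finite S"
    using assms(1) finite_verts_K_prod by (rule finite_subset)
  ultimately have "card (neighbours K_prod S p) \<le> card (S \<inter> {Inl a} \<times> B2 \<union> S \<inter> B1 \<times> {Inl v})"
    by (intro card_mono) auto
  also have "\<dots> \<le> card (S \<inter> {Inl a} \<times> B2) + card (S \<inter> B1 \<times> {Inl v})"
    by (rule card_Un_le)
  also have "card (S \<inter> {Inl a} \<times> B2) \<le> min (card (S \<inter> A1 \<times> B2)) t2"
    using card_Int_Times_le[OF fin, of "{Inl a}" B2 A1 B2] p by (simp add: card_image)
  also have "card (S \<inter> B1 \<times> {Inl v}) \<le> min (card (S \<inter> B1 \<times> A2)) t1"
    using card_Int_Times_le[OF fin, of B1 "{Inl v}" B1 A2] p by (simp add: card_image)
  finally show ?thesis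
    by simp
qed

lemma card_neighbours_K_prod_A1_B2_le:
  assumes "S \<subseteq> verts K_prod" "S \<inter> B1 \<times> B2 = {}" "p \<in> A1 \<times> B2"
  shows "card (neighbours K_prod S p) \<le> min (card (S \<inter> A1 \<times> A2)) s2 + card (S \<inter> B1 \<times> A2)"
proof -
  obtain a w where p: "p = (Inl a, Inr w)" "a < s1" "w < t2"
    using assms(3) by auto
  then have "p \<in> verts K_prod"
    by (simp add: verts_K_prod)
  have "S \<inter> B1 \<times> {Inr w} \<subseteq> S \<inter> B1 \<times> B2"
    using p by auto
  then have no_B1_B2: "S \<inter> B1 \<times> {Inr w} = {}"
    using assms(2) by blast
  have "neighbours K_prod S p = S \<inter> (insert (Inl a) B1 \<times> insert (Inr w) A2 - {p})"
    unfolding neighbours_K_prod[OF assms(1) \<open>p \<in> verts K_prod\<close>] using p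
    by (simp add: closed_nbhd_K_bip_Inl closed_nbhd_K_bip_Inr Int_Diff)
  also have "\<dots> \<subseteq> S \<inter> ({Inl a} \<times> A2 \<union> B1 \<times> {Inr w} \<union> B1 \<times> A2)"
    unfolding p(1) by (intro Int_mono order_refl Times_insert_minus_subset)
  also have "\<dots> = S \<inter> {Inl a} \<times> A2 \<union> S \<inter> B1 \<times> A2"
    using no_B1_B2 by (simp add: Int_Un_distrib)
  finally have "neighbours K_prod S p \<subseteq> S \<inter> {Inl a} \<times> A2 \<union> S \<inter> B1 \<times> A2" .
  moreover have fin: "finite S"
    using assms(1) finite_verts_K_prod by (rule finite_subset)
  ultimately have "card (neighbours K_prod S p) \<le> card (S \<inter> {Inl a} \<times> A2 \<union> S \<inter> B1 \<times> A2)"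
    by (intro card_mono) auto
  also have "\<dots> \<le> card (S \<inter> {Inl a} \<times> A2) + card (S \<inter> B1 \<times> A2)"
    by (rule card_Un_le)
  also have "card (S \<inter> {Inl a} \<times> A2) \<le> min (card (S \<inter> A1 \<times> A2)) s2"
    using card_Int_Times_le[OF fin, of "{Inl a}" A2 A1 A2] p by (simp add: card_image)
  finally show ?thesis
    by simp
qed

lemma card_neighbours_K_prod_B1_A2_le:
  assumes "S \<subseteq> verts K_prod" "S \<inter> B1 \<times> B2 = {}" "p \<in> B1 \<times> A2"
  shows "card (neighbours K_prod S p) \<le> min (card (S \<inter> A1 \<times> A2)) s1 + card (S \<inter> A1 \<times> B2)"
proof -
  obtain b v where p: "p = (Inr b, Inl v)" "b < t1" "v < s2"
    using assms(3) by auto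
  then have "p \<in> verts K_prod"
    by (simp add: verts_K_prod)
  have "S \<inter> {Inr b} \<times> B2 \<subseteq> S \<inter> B1 \<times> B2"
    using p by auto
  then have no_B1_B2: "S \<inter> {Inr b} \<times> B2 = {}"
    using assms(2) by blast
  have "neighbours K_prod S p = S \<inter> (insert (Inr b) A1 \<times> insert (Inl v) B2 - {p})"
    unfolding neighbours_K_prod[OF assms(1) \<open>p \<in> verts K_prod\<close>] using p
    by (simp add: closed_nbhd_K_bip_Inl closed_nbhd_K_bip_Inr Int_Diff)
  also have "\<dots> \<subseteq> S \<inter> ({Inr b} \<times> B2 \<union> A1 \<times> {Inl v} \<union> A1 \<times> B2)"
    unfolding p(1) by (intro Int_mono order_refl Times_insert_minus_subset)
  also have "\<dots> = S \<inter> A1 \<times> {Inl v} \<union> S \<inter> A1 \<times> B2"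
    using no_B1_B2 by (simp add: Int_Un_distrib)
  finally have "neighbours K_prod S p \<subseteq> S \<inter> A1 \<times> {Inl v} \<union> S \<inter> A1 \<times> B2" .
  moreover have fin: "finite S"
    using assms(1) finite_verts_K_prod by (rule finite_subset)
  ultimately have "card (neighbours K_prod S p) \<le> card (S \<inter> A1 \<times> {Inl v} \<union> S \<inter> A1 \<times> B2)"
    by (intro card_mono) auto
  also have "\<dots> \<le> card (S \<inter> A1 \<times> {Inl v}) + card (S \<inter> A1 \<times> B2)"
    by (rule card_Un_le)
  also have "card (S \<inter> A1 \<times> {Inl v}) \<le> min (card (S \<inter> A1 \<times> A2)) s1"
    using card_Int_Times_le[OF fin, of A1 "{Inl v}" A1 A2] p by (simp add: card_image)
  finally show ?thesis
    by simp
qed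

lemma exists_vertex_few_neighbours_K_prod:
  assumes "S \<subseteq> verts K_prod" "S \<noteq> {}"
  shows "\<exists>p\<in>S. card (neighbours K_prod S p) \<le>
           max (s1 + s2 + s1 * s2)
             (max (min (t1 + t2) (min (s1 * (t2 + 1)) (s2 * (t1 + 1)))) (min (s1 * t2) (s2 * t1)))"
    (is "\<exists>p\<in>S. card (neighbours K_prod S p) \<le> ?D")
proof -
  have witness: "\<exists>p\<in>S. card (neighbours K_prod S p) \<le> ?D" if "p \<in> S" "card (neighbours K_prod S p) \<le> d" "d \<le> ?D" for p d
    using that le_trans by blast
  show ?thesis
  proof (cases "S \<inter> B1 \<times> B2 = {}")
    case False
    then obtain p where "p \<in> S" "p \<in> B1 \<times> B2"
      by blast
    then show ?thesis
      using card_neighbours_K_prod_B1_B2_le[OF assms(1)] by (intro witness) auto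
  next
    case no_B1_B2: True
    define X Y Z where "X = S \<inter> A1 \<times> A2" and "Y = S \<inter> A1 \<times> B2" and "Z = S \<inter> B1 \<times> A2"
    have S_eq: "S = X \<union> Y \<union> Z"
      using assms(1) no_B1_B2 by (auto simp: verts_K_prod X_def Y_def Z_def)
    have fin: "finite S"
      using assms(1) finite_verts_K_prod by (rule finite_subset)
    have "card Y \<le> card (A1 \<times> B2)" "card Z \<le> card (B1 \<times> A2)"
      unfolding Y_def Z_def by (intro card_mono; simp)+
    then have card_Y: "card Y \<le> s1 * t2" and card_Z: "card Z \<le> s2 * t1"
      by (simp_all add: card_cartesian_product card_image mult.commute)
    have deg_X: "card (neighbours K_prod S p) \<le> min (card Y) t2 + min (card Z) t1" if "p \<in> X" for p
      using card_neighbours_K_prod_A1_A2_le[OF assms(1) no_B1_B2] that by (simp add: X_def Y_def Z_def)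
    have deg_Y: "card (neighbours K_prod S p) \<le> min (card X) s2 + card Z" if "p \<in> Y" for p
      using card_neighbours_K_prod_A1_B2_le[OF assms(1) no_B1_B2] that by (simp add: X_def Y_def Z_def)
    have deg_Z: "card (neighbours K_prod S p) \<le> min (card X) s1 + card Y" if "p \<in> Z" for p
      using card_neighbours_K_prod_B1_A2_le[OF assms(1) no_B1_B2] that by (simp add: X_def Y_def Z_def)
    have XYZ: "X \<subseteq> S" "Y \<subseteq> S" "Z \<subseteq> S"
      using S_eq by auto
    consider "Y = {}" "Z = {}" | "Y \<noteq> {}" "Z = {}" | "Y = {}" "Z \<noteq> {}"
      | "X = {}" "Y \<noteq> {}" "Z \<noteq> {}" | "X \<noteq> {}" "Y \<noteq> {}" "Z \<noteq> {}"
      by blast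
    then show ?thesis
    proof cases
      case 1
      then obtain p where "p \<in> X"
        using S_eq assms(2) by auto
      then show ?thesis
        using deg_X[of p] XYZ 1 by (intro witness[of p 0]) auto
    next
      case 2
      then obtain p where "p \<in> Y"
        by auto
      then show ?thesis
        using deg_Y[of p] XYZ 2 by (intro witness[of p s2]) auto
    next
      case 3
      then obtain p where "p \<in> Z"
        by auto
      then show ?thesis
        using deg_Z[of p] XYZ 3 by (intro witness[of p s1]) auto
    next
      case 4
      then obtain p q where "p \<in> Y" "q \<in> Z"
        by auto
      show ?thesis
      proof (cases "card Z \<le> card Y")
        case True
        then show ?thesis
          using deg_Y[OF \<open>p \<in> Y\<close>] XYZ 4 card_Y card_Z \<open>p \<in> Y\<close>
          by (intro witness[of p "card Z"]) auto
      next
        case False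
        then show ?thesis
          using deg_Z[OF \<open>q \<in> Z\<close>] XYZ 4 card_Y card_Z \<open>q \<in> Z\<close>
          by (intro witness[of q "card Y"]) auto
      qed
    next
      case 5
      then obtain p q r where "p \<in> X" "q \<in> Y" "r \<in> Z"
        by auto
      have "card (neighbours K_prod S p) \<le> t1 + t2"
        using deg_X[OF \<open>p \<in> X\<close>] by simp
      moreover have "card (neighbours K_prod S q) \<le> s2 * (t1 + 1)"
        using deg_Y[OF \<open>q \<in> Y\<close>] card_Z by simp
      moreover have "card (neighbours K_prod S r) \<le> s1 * (t2 + 1)"
        using deg_Z[OF \<open>r \<in> Z\<close>] card_Y by simp
      moreover have "min (t1 + t2) (min (s1 * (t2 + 1)) (s2 * (t1 + 1))) \<in> {t1 + t2, s1 * (t2 + 1), s2 * (t1 + 1)}"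
        by (simp add: min_def)
      ultimately show ?thesis
        using XYZ \<open>p \<in> X\<close> \<open>q \<in> Y\<close> \<open>r \<in> Z\<close>
        by (elim insertE emptyE; intro witness[where d = "min (t1 + t2) (min (s1 * (t2 + 1)) (s2 * (t1 + 1)))"])
          auto
    qed
  qed
qed

end

theorem mainTheorem6:
  fixes s1 t1 s2 t2 :: nat
  assumes "1 \<le> s1" "s1 \<le> t1" "1 \<le> s2" "s2 \<le> t2"
  shows "degen (strong_prod (K_bip s1 t1) (K_bip s2 t2)) =
           max (s1 + s2 + s1 * s2)
             (max (min (t1 + t2) (min (s1 * (t2 + 1)) (s2 * (t1 + 1))))
                  (min (s1 * t2) (s2 * t1)))" (is "degen ?G = ?D")
proof (rule antisym)
  show "degen ?G \<le> ?D"
    using simple_graph_K_prod exists_vertex_few_neighbours_K_prod by (rule degen_le)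
  let ?S2 = "verts ?G - Inr ` {..<t1} \<times> Inr ` {..<t2}"
  let ?S3 = "Inl ` {..<s1} \<times> Inr ` {..<t2} \<union> Inr ` {..<t1} \<times> Inl ` {..<s2}"
  have "(Inl 0, Inl 0) \<in> ?S2" "(Inl 0, Inr 0) \<in> ?S3"
    using assms by (auto simp: verts_K_prod)
  then have ne: "verts ?G \<noteq> {}" "?S2 \<noteq> {}" "?S3 \<noteq> {}" and S3: "?S3 \<subseteq> verts ?G"
    by (auto simp: verts_K_prod)
  have "s1 + s2 + s1 * s2 \<le> degen ?G"
    using card_neighbours_K_prod_verts_ge[OF assms(2,4)]
    by (rule le_degen[OF simple_graph_K_prod order_refl ne(1)])
  moreover have "min (t1 + t2) (min (s1 * (t2 + 1)) (s2 * (t1 + 1))) \<le> degen ?G"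
    using card_neighbours_K_prod_minus_B1_B2_ge
    by (rule le_degen[OF simple_graph_K_prod Diff_subset ne(2)])
  moreover have "min (s1 * t2) (s2 * t1) \<le> degen ?G"
    using card_neighbours_K_prod_A1_B2_B1_A2_ge
    by (rule le_degen[OF simple_graph_K_prod S3 ne(3)])
  ultimately show "?D \<le> degen ?G"
    by simp
qed

end
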